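(* Let $\mathbf X=(X_t)_{t\in I}$ be an $N$-MPR process, where $0\in I$. Then $E((X_t-X_s)^n\mid\mathcal F_{\le s})$ is almost surely constant (non-random) for every $0<n\le N$ and all $s<t$ in $I$ if and only if $\mathbf X$ has a structural matrix $V_N(t)=[v_{i,j}(t)]_{i,j=0,\dots,N}$ of the form $$v_{i,j}(t)=\begin{cases}0,& i<j,\\ 1,& i=j,\\ \binom{i}{j}g_{i-j}(t),& i>j,\end{cases}$$ where $g_k$, $k=1,\dots,N$, are continuous functions on $I$ with $g_k(0)=0$.
   Context: $I$ is a segment of the real line. $\mathbf X$ is a real Markov process with all moments finite and infinite support of each $X_t$; $\mathcal F_{\le s}=\sigma(X_v:v\in I,v\le s)$. $N$-TLI: for every $0<n\le N$, $s\ne t$, $[\operatorname{cov}(X_t^i,X_s^j)]_{i,j=1}^n$ is non-singular. $N$-MSC: $EX_t^mX_s^j$ continuous in $(t,s)$ at least on the diagonal for $m,j\le N$. $N$-MPR: Markov, $N$-TLI, $N$-MSC and for $1\le n\le N$, $s\le t$, $E(X_t^n\mid\mathcal F_{\le s})=\sum_{k=0}^n\gamma_{n,k}(s,t)X_s^k$ a.s.; with $\gamma_{0,0}=1$, $\gamma_{i,j}=0$ for $j>i$, $\mathcal A_N(s,t)=[\gamma_{i,j}(s,t)]_{i,j=0}^N$. A structural matrix is any family $\{V_N(t)\}_{t\in I}$ of non-singular lower triangular $(N+1)\times(N+1)$ matrices with $\mathcal A_N(s,u)=V_N(u)V_N^{-1}(s)$ for all $s\le u$ in $I$. *)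

theory Defs
  imports "HOL-Probability.Probability" "Jordan_Normal_Form.Matrix"
begin

definition nat_filt :: "'a measure \<Rightarrow> real set \<Rightarrow> (real \<Rightarrow> 'a \<Rightarrow> real) \<Rightarrow> real \<Rightarrow> 'a measure" where
  "nat_filt M I X s = sigma (space M)
     (\<Union>v\<in>{v\<in>I. v \<le> s}. sets (vimage_algebra (space M) (X v) borel))"

definition gen_alg :: "'a measure \<Rightarrow> (real \<Rightarrow> 'a \<Rightarrow> real) \<Rightarrow> real \<Rightarrow> 'a measure" where
  "gen_alg M X s = vimage_algebra (space M) (X s) borel"

definition std_process :: "'a measure \<Rightarrow> real set \<Rightarrow> (real \<Rightarrow> 'a \<Rightarrow> real) \<Rightarrow> bool" where
  "std_process M I X \<longleftrightarrow> prob_space M \<and> is_interval I \<and>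
     (\<forall>t\<in>I. X t \<in> borel_measurable M) \<and>
     (\<forall>t\<in>I. \<forall>k::nat. integrable M (\<lambda>\<omega>. X t \<omega> ^ k)) \<and>
     (\<forall>t\<in>I. \<not> (\<exists>S. finite S \<and> (AE \<omega> in M. X t \<omega> \<in> S)))"

definition markov :: "'a measure \<Rightarrow> real set \<Rightarrow> (real \<Rightarrow> 'a \<Rightarrow> real) \<Rightarrow> bool" where
  "markov M I X \<longleftrightarrow> (\<forall>s\<in>I. \<forall>t\<in>I. s \<le> t \<longrightarrow>
     (\<forall>f::real \<Rightarrow> real. f \<in> borel_measurable borel \<and> bounded (range f) \<longrightarrow>
       (AE \<omega> in M. real_cond_exp M (nat_filt M I X s) (\<lambda>\<omega>. f (X t \<omega>)) \<omega>
                   = real_cond_exp M (gen_alg M X s) (\<lambda>\<omega>. f (X t \<omega>)) \<omega>)))"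

definition covar :: "'a measure \<Rightarrow> ('a \<Rightarrow> real) \<Rightarrow> ('a \<Rightarrow> real) \<Rightarrow> real" where
  "covar M Y Z = (\<integral>\<omega>. Y \<omega> * Z \<omega> \<partial>M) - (\<integral>\<omega>. Y \<omega> \<partial>M) * (\<integral>\<omega>. Z \<omega> \<partial>M)"

text \<open>N-TLI: the n x n matrix [cov(X_t^i, X_s^j)]_{i,j=1..n} is non-singular (index shift by 1).\<close>
definition TLI :: "nat \<Rightarrow> 'a measure \<Rightarrow> real set \<Rightarrow> (real \<Rightarrow> 'a \<Rightarrow> real) \<Rightarrow> bool" where
  "TLI N M I X \<longleftrightarrow> (\<forall>n. 0 < n \<and> n \<le> N \<longrightarrow> (\<forall>s\<in>I. \<forall>t\<in>I. s \<noteq> t \<longrightarrow>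
     invertible_mat (Matrix.mat n n (\<lambda>(i,j). covar M (\<lambda>\<omega>. X t \<omega> ^ (i+1)) (\<lambda>\<omega>. X s \<omega> ^ (j+1))))))"

definition MSC :: "nat \<Rightarrow> 'a measure \<Rightarrow> real set \<Rightarrow> (real \<Rightarrow> 'a \<Rightarrow> real) \<Rightarrow> bool" where
  "MSC N M I X \<longleftrightarrow> (\<forall>m j. m \<le> N \<and> j \<le> N \<longrightarrow> (\<forall>t\<in>I.
     continuous (at (t,t) within I \<times> I) (\<lambda>(u,v). \<integral>\<omega>. X u \<omega> ^ m * X v \<omega> ^ j \<partial>M)))"

definition MPR :: "nat \<Rightarrow> 'a measure \<Rightarrow> real set \<Rightarrow> (real \<Rightarrow> 'a \<Rightarrow> real)
    \<Rightarrow> (nat \<Rightarrow> nat \<Rightarrow> real \<Rightarrow> real \<Rightarrow> real) \<Rightarrow> bool" where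
  "MPR N M I X gamma \<longleftrightarrow> std_process M I X \<and> markov M I X \<and> TLI N M I X \<and> MSC N M I X \<and>
     (\<forall>n. 1 \<le> n \<and> n \<le> N \<longrightarrow> (\<forall>s\<in>I. \<forall>t\<in>I. s \<le> t \<longrightarrow>
       (AE \<omega> in M. real_cond_exp M (nat_filt M I X s) (\<lambda>\<omega>. X t \<omega> ^ n) \<omega>
          = (\<Sum>k=0..n. gamma n k s t * X s \<omega> ^ k))))"

definition A_mat :: "nat \<Rightarrow> (nat \<Rightarrow> nat \<Rightarrow> real \<Rightarrow> real \<Rightarrow> real) \<Rightarrow> real \<Rightarrow> real \<Rightarrow> real mat" where
  "A_mat N gamma s t = Matrix.mat (N+1) (N+1) (\<lambda>(i,j).
     if j > i then 0 else if i = 0 then 1 else gamma i j s t)"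

definition lower_triangular :: "real mat \<Rightarrow> bool" where
  "lower_triangular A \<longleftrightarrow> (\<forall>i j. i < dim_row A \<and> j < dim_col A \<and> i < j \<longrightarrow> A $$ (i,j) = 0)"

definition structural_matrix :: "nat \<Rightarrow> real set \<Rightarrow> (nat \<Rightarrow> nat \<Rightarrow> real \<Rightarrow> real \<Rightarrow> real)
    \<Rightarrow> (real \<Rightarrow> real mat) \<Rightarrow> bool" where
  "structural_matrix N I gamma V \<longleftrightarrow>
     (\<forall>t\<in>I. V t \<in> carrier_mat (N+1) (N+1) \<and> invertible_mat (V t) \<and> lower_triangular (V t)) \<and>
     (\<forall>s\<in>I. \<forall>u\<in>I. s \<le> u \<longrightarrow> (\<forall>W. inverts_mat (V s) W \<and> inverts_mat W (V s) \<longrightarrow>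
        A_mat N gamma s u = V u * W))"

end

theory Submission
  imports Defs
begin

text \<open>Write \<open>c s t n = E (X t - X s)^n\<close>. Expanding \<open>X t^n = (X s + (X t - X s))^n\<close>
  binomially shows that the conditional moments of the increments are constant iff
  \<open>E (X t^n | F s) = \<Sum>k. (n choose k) c s t (n - k) X s^k\<close>, i.e., since regression coefficients
  are unique for a variable of infinite support, iff \<open>A\<^sub>N(s,t)\<close> is the lower triangular matrix
  \<open>[(i choose j) c s t (i - j)]\<close>. Such matrices multiply by binomial convolution of their first
  columns, so they form a commutative group, and conditioning on \<open>F t\<close> gives the
  Chapman--Kolmogorov relation \<open>c s u = c s t \<star> c t u\<close>. Hence \<open>V(t) = A(0,t)\<close> for \<open>t \<ge> 0\<close> and
  \<open>V(t) = A(t,0)\<^sup>-\<^sup>1\<close> for \<open>t < 0\<close> is a structural matrix of the required form; N-MSC makes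
  \<open>c t\<^sub>0 t\<close> and \<open>c t t\<^sub>0\<close> tend to the unit sequence as \<open>t \<rightarrow> t\<^sub>0\<close>, which gives continuity of
  the \<open>g\<^sub>k\<close>. Conversely, for a structural matrix of this form \<open>A(s,t) = V(t) V(s)\<^sup>-\<^sup>1\<close> is
  again binomial, and undoing the expansion shows that the conditional increment moments are
  the entries of its first column.\<close>

section \<open>Binomial convolution\<close>

definition binom_conv :: "(nat \<Rightarrow> real) \<Rightarrow> (nat \<Rightarrow> real) \<Rightarrow> nat \<Rightarrow> real" where
  "binom_conv a b n = (\<Sum>k=0..n. real (n choose k) * a k * b (n - k))"

definition binom_unit :: "nat \<Rightarrow> real" where
  "binom_unit n = (if n = 0 then 1 else 0)"

definition binom_mat :: "nat \<Rightarrow> (nat \<Rightarrow> real) \<Rightarrow> real mat" where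
  "binom_mat N a = Matrix.mat (N+1) (N+1) (\<lambda>(i,j). if i < j then 0 else real (i choose j) * a (i - j))"

lemma binom_conv_cong:
  "(\<And>k. k \<le> n \<Longrightarrow> a k = a' k) \<Longrightarrow> (\<And>k. k \<le> n \<Longrightarrow> b k = b' k) \<Longrightarrow>
    binom_conv a b n = binom_conv a' b' n"
  unfolding binom_conv_def by (intro sum.cong) auto

lemma binom_conv_commute: "binom_conv a b = binom_conv b a"
proof
  fix n
  have "binom_conv a b n = (\<Sum>k=0..n. real (n choose (n - k)) * a (n - k) * b (n - (n - k)))"
    unfolding binom_conv_def by (rule sum.atLeastAtMost_rev[of _ 0 n, simplified])
  also have "\<dots> = binom_conv b a n"
    unfolding binom_conv_def by (rule sum.cong) (auto simp: binomial_symmetric[symmetric])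
  finally show "binom_conv a b n = binom_conv b a n" .
qed

lemma binom_conv_unit_right [simp]: "binom_conv a binom_unit = a"
proof
  fix n
  have "binom_conv a binom_unit n = (\<Sum>k\<in>{n}. real (n choose k) * a k * binom_unit (n - k))"
    unfolding binom_conv_def by (rule sum.mono_neutral_right) (auto simp: binom_unit_def)
  then show "binom_conv a binom_unit n = a n" by (simp add: binom_unit_def)
qed

lemma binom_conv_unit_left [simp]: "binom_conv binom_unit a = a"
  by (simp add: binom_conv_commute[of binom_unit])

lemma binom_conv_powers_eq_poly:
  "binom_conv (\<lambda>k. x ^ k) c n = (\<Sum>j=0..n. (real (n choose j) * c (n - j)) * x ^ j)"
  unfolding binom_conv_def by (rule sum.cong) auto

lemma binom_conv_powers_neg_powers: "binom_conv (\<lambda>k. (- x) ^ k) (\<lambda>k. x ^ k) = binom_unit"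
proof
  fix n
  show "binom_conv (\<lambda>k. (- x) ^ k) (\<lambda>k. x ^ k) n = binom_unit n"
    unfolding binom_conv_def binom_unit_def using binomial_ring[of "- x" x n]
    by (cases "n = 0") (simp_all add: atLeast0AtMost ac_simps power_0_left)
qed

lemma binom_mat_carrier: "binom_mat N a \<in> carrier_mat (N+1) (N+1)"
  unfolding binom_mat_def by simp

lemma binom_mat_index_0: "n \<le> N \<Longrightarrow> binom_mat N a $$ (n, 0) = a n"
  by (simp add: binom_mat_def)

lemma binom_mat_unit: "binom_mat N binom_unit = 1\<^sub>m (N+1)"
  by (rule eq_matI) (auto simp: binom_mat_def binom_unit_def)

lemma binom_mat_cong: "(\<And>k. k \<le> N \<Longrightarrow> a k = b k) \<Longrightarrow> binom_mat N a = binom_mat N b"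
  unfolding binom_mat_def by (rule cong_mat) auto

lemma lower_triangular_binom_mat: "lower_triangular (binom_mat N a)"
  unfolding lower_triangular_def binom_mat_def by simp

lemma sum_binom_binom_shift:
  assumes "j \<le> i"
  shows "(\<Sum>k=j..i. real (i choose k) * a (i - k) * (real (k choose j) * b (k - j)))
    = real (i choose j) * binom_conv b a (i - j)"
proof -
  have "(\<Sum>k=j..i. real (i choose k) * a (i - k) * (real (k choose j) * b (k - j)))
      = (\<Sum>l=0..i-j. real (i choose (l + j)) * a (i - (l + j)) * (real ((l + j) choose j) * b l))"
  proof -
    have "{j..i} = {0 + j..(i - j) + j}" using assms by auto
    then show ?thesis by (simp only: sum.shift_bounds_cl_nat_ivl) simp
  qed
  also have "\<dots> = (\<Sum>l=0..i-j. real (i choose j) * (real ((i - j) choose l) * b l * a (i - j - l)))"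
  proof (rule sum.cong)
    fix l assume "l \<in> {0..i-j}"
    then have "(i choose (l + j)) * ((l + j) choose j) = (i choose j) * ((i - j) choose l)"
      using assms choose_mult[of j "l + j" i] by auto
    then have "real (i choose (l + j)) * real ((l + j) choose j) = real (i choose j) * real ((i - j) choose l)"
      by (metis of_nat_mult)
    moreover have "i - (l + j) = i - j - l" by simp
    ultimately show "real (i choose (l + j)) * a (i - (l + j)) * (real ((l + j) choose j) * b l)
        = real (i choose j) * (real ((i - j) choose l) * b l * a (i - j - l))"
      by (metis (no_types, lifting) mult.commute mult.left_commute)
  qed simp
  also have "\<dots> = real (i choose j) * binom_conv b a (i - j)"
    by (simp add: binom_conv_def sum_distrib_left)
  finally show ?thesis .
qed

lemma binom_mat_mult: "binom_mat N a * binom_mat N b = binom_mat N (binom_conv a b)"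
proof (rule eq_matI)
  fix i j assume "i < dim_row (binom_mat N (binom_conv a b))" "j < dim_col (binom_mat N (binom_conv a b))"
  then have ij: "i \<le> N" "j \<le> N" by (auto simp: binom_mat_def)
  have "(binom_mat N a * binom_mat N b) $$ (i,j)
      = (\<Sum>k<N+1. (if i < k then 0 else real (i choose k) * a (i - k)) *
                   (if k < j then 0 else real (k choose j) * b (k - j)))"
    using ij by (simp add: binom_mat_def scalar_prod_def atLeast0LessThan)
  also have "\<dots> = (if i < j then 0 else
      (\<Sum>k=j..i. real (i choose k) * a (i - k) * (real (k choose j) * b (k - j))))"
  proof (cases "i < j")
    case False
    have "(\<Sum>k<N+1. (if i < k then 0 else real (i choose k) * a (i - k)) *
                   (if k < j then 0 else real (k choose j) * b (k - j)))
        = (\<Sum>k=j..i. real (i choose k) * a (i - k) * (real (k choose j) * b (k - j)))"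
      using False ij by (intro sum.mono_neutral_cong_right) auto
    then show ?thesis using False by simp
  qed (auto intro!: sum.neutral)
  also have "\<dots> = binom_mat N (binom_conv a b) $$ (i,j)"
    using ij by (simp add: binom_mat_def sum_binom_binom_shift binom_conv_commute[of b])
  finally show "(binom_mat N a * binom_mat N b) $$ (i,j) = binom_mat N (binom_conv a b) $$ (i,j)" .
qed (auto simp: binom_mat_def)

text \<open>Associativity is inherited from matrix multiplication, reading off column 0 of
  a large enough matrix.\<close>

lemma binom_conv_assoc: "binom_conv (binom_conv a b) c = binom_conv a (binom_conv b c)"
proof
  fix n
  have "binom_mat n (binom_conv (binom_conv a b) c) = (binom_mat n a * binom_mat n b) * binom_mat n c"
    by (simp add: binom_mat_mult)
  also have "\<dots> = binom_mat n a * (binom_mat n b * binom_mat n c)"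
    by (rule assoc_mult_mat[OF binom_mat_carrier binom_mat_carrier binom_mat_carrier])
  also have "\<dots> = binom_mat n (binom_conv a (binom_conv b c))"
    by (simp add: binom_mat_mult)
  finally show "binom_conv (binom_conv a b) c n = binom_conv a (binom_conv b c) n"
    by (metis binom_mat_index_0 order_refl)
qed

interpretation binom_conv: Groups.comm_monoid binom_conv binom_unit
  by (unfold_locales; rule binom_conv_assoc binom_conv_commute binom_conv_unit_right)

fun binom_inv :: "(nat \<Rightarrow> real) \<Rightarrow> nat \<Rightarrow> real" where
  "binom_inv a n = (if n = 0 then 1 else - (\<Sum>k<n. real (n choose k) * binom_inv a k * a (n - k)))"

declare binom_inv.simps [simp del]

lemma binom_inv_0 [simp]: "binom_inv a 0 = 1"
  by (simp add: binom_inv.simps)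

lemma binom_conv_inv_right [simp]:
  assumes "a 0 = 1"
  shows "binom_conv a (binom_inv a) = binom_unit"
proof
  fix n
  show "binom_conv a (binom_inv a) n = binom_unit n"
  proof (cases "n = 0")
    case False
    have "binom_conv a (binom_inv a) n
        = (\<Sum>k<n. real (n choose k) * binom_inv a k * a (n - k)) + binom_inv a n * a 0"
      by (simp add: binom_conv_commute[of a] binom_conv_def atLeast0AtMost lessThan_Suc_atMost[symmetric])
    also have "\<dots> = 0" using assms False by (subst (2) binom_inv.simps) simp
    finally show ?thesis using False by (simp add: binom_unit_def)
  qed (use assms in \<open>simp add: binom_conv_def binom_unit_def\<close>)
qed

lemma binom_conv_inv_left [simp]: "a 0 = 1 \<Longrightarrow> binom_conv (binom_inv a) a = binom_unit"
  by (simp add: binom_conv_commute[of "binom_inv a"])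

lemma binom_inv_unit [simp]: "binom_inv binom_unit = binom_unit"
  by (metis binom_conv_inv_right binom_conv_unit_left binom_unit_def)

lemma binom_conv_cancel:
  assumes "b 0 = 1" and "\<And>k. k \<le> n \<Longrightarrow> binom_conv a b k = c k"
  shows "a n = binom_conv c (binom_inv b) n"
proof -
  have "a n = binom_conv (binom_conv a b) (binom_inv b) n"
    using assms(1) by (simp add: binom_conv.assoc)
  also have "\<dots> = binom_conv c (binom_inv b) n"
    using assms(2) by (intro binom_conv_cong) auto
  finally show ?thesis .
qed

lemma tendsto_binom_conv:
  assumes "\<And>i. i \<le> n \<Longrightarrow> ((\<lambda>t. a t i) \<longlongrightarrow> l i) F"
  shows "((\<lambda>t. binom_conv (a t) b n) \<longlongrightarrow> binom_conv l b n) F"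
  unfolding binom_conv_def using assms by (intro tendsto_intros) auto

lemma tendsto_binom_inv:
  assumes "\<And>i. i \<le> n \<Longrightarrow> ((\<lambda>t. a t i) \<longlongrightarrow> l i) F"
  shows "((\<lambda>t. binom_inv (a t) n) \<longlongrightarrow> binom_inv l n) F"
  using assms
proof (induction n rule: less_induct)
  case (less n)
  have "((\<lambda>t. - (\<Sum>k<n. real (n choose k) * binom_inv (a t) k * a t (n - k))) \<longlongrightarrow>
      - (\<Sum>k<n. real (n choose k) * binom_inv l k * l (n - k))) F"
    using less by (intro tendsto_intros) auto
  then show ?case by (subst (1 2) binom_inv.simps) simp
qed

lemma binom_mat_inverts:
  assumes "a 0 = 1"
  shows "inverts_mat (binom_mat N a) (binom_mat N (binom_inv a))"
    and "inverts_mat (binom_mat N (binom_inv a)) (binom_mat N a)"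
  using assms by (simp_all add: inverts_mat_def binom_mat_mult binom_mat_unit, simp_all add: binom_mat_def)

lemma invertible_binom_mat: "a 0 = 1 \<Longrightarrow> invertible_mat (binom_mat N a)"
  unfolding invertible_mat_def using binom_mat_inverts[of a N]
  by (auto simp: binom_mat_def square_mat.simps)

lemma binom_mat_inverse_unique:
  assumes "a 0 = 1" "inverts_mat (binom_mat N a) W" "inverts_mat W (binom_mat N a)"
  shows "W = binom_mat N (binom_inv a)"
proof -
  have W: "W \<in> carrier_mat (N+1) (N+1)"
    using assms(2,3) unfolding inverts_mat_def
    by (metis binom_mat_carrier carrier_matD carrier_matI index_mult_mat(2,3) index_one_mat(2,3))
  have "W = W * (binom_mat N a * binom_mat N (binom_inv a))"
    using W binom_mat_inverts(1)[of a N] assms(1) by (simp add: inverts_mat_def binom_mat_def)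
  also have "\<dots> = (W * binom_mat N a) * binom_mat N (binom_inv a)"
    using W by (simp add: assoc_mult_mat[OF W binom_mat_carrier binom_mat_carrier])
  also have "\<dots> = binom_mat N (binom_inv a)"
    using assms(3) W left_mult_one_mat[OF binom_mat_carrier] by (simp add: inverts_mat_def)
  finally show ?thesis .
qed

lemma structural_matrix_binom_mat_iff:
  assumes "\<And>t. t \<in> I \<Longrightarrow> v t 0 = 1"
  shows "structural_matrix N I gamma (\<lambda>t. binom_mat N (v t)) \<longleftrightarrow>
    (\<forall>s\<in>I. \<forall>u\<in>I. s \<le> u \<longrightarrow> A_mat N gamma s u = binom_mat N (binom_conv (v u) (binom_inv (v s))))"
  (is "?sm \<longleftrightarrow> ?A")
proof
  assume ?sm
  show ?A
  proof (intro ballI impI)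
    fix s u assume "s \<in> I" "u \<in> I" "s \<le> u"
    then show "A_mat N gamma s u = binom_mat N (binom_conv (v u) (binom_inv (v s)))"
      using \<open>?sm\<close> assms binom_mat_inverts[of "v s" N]
      unfolding structural_matrix_def by (simp add: binom_mat_mult)
  qed
next
  assume A: ?A
  have "A_mat N gamma s u = binom_mat N (v u) * W"
    if "s \<in> I" "u \<in> I" "s \<le> u" "inverts_mat (binom_mat N (v s)) W" "inverts_mat W (binom_mat N (v s))"
    for s u W
    using that A assms binom_mat_inverse_unique[of "v s" N W] by (simp add: binom_mat_mult)
  then show ?sm
    using assms by (auto simp: structural_matrix_def binom_mat_carrier[simplified] invertible_binom_mat
        lower_triangular_binom_mat)
qed

lemma A_mat_eq_binom_mat_iff:
  assumes "c 0 = 1"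
  shows "A_mat N gamma s u = binom_mat N c \<longleftrightarrow>
    (\<forall>i j. 1 \<le> i \<and> i \<le> N \<and> j \<le> i \<longrightarrow> gamma i j s u = real (i choose j) * c (i - j))"
proof
  assume eq: "A_mat N gamma s u = binom_mat N c"
  show "\<forall>i j. 1 \<le> i \<and> i \<le> N \<and> j \<le> i \<longrightarrow> gamma i j s u = real (i choose j) * c (i - j)"
  proof (intro allI impI)
    fix i j assume ij: "1 \<le> i \<and> i \<le> N \<and> j \<le> i"
    have "A_mat N gamma s u $$ (i, j) = binom_mat N c $$ (i, j)" using eq by simp
    then show "gamma i j s u = real (i choose j) * c (i - j)"
      using ij by (simp add: A_mat_def binom_mat_def)
  qed
next
  assume "\<forall>i j. 1 \<le> i \<and> i \<le> N \<and> j \<le> i \<longrightarrow> gamma i j s u = real (i choose j) * c (i - j)"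
  then show "A_mat N gamma s u = binom_mat N c"
    using assms by (intro eq_matI) (auto simp: A_mat_def binom_mat_def)
qed

lemma mat_unit_diagonal_eq_binom_mat:
  "Matrix.mat (N+1) (N+1) (\<lambda>(i,j). if i < j then 0 else if i = j then 1 else real (i choose j) * g (i - j))
    = binom_mat N (\<lambda>k. if k = 0 then 1 else g k)"
  unfolding binom_mat_def by (rule cong_mat) auto

section \<open>Flows of binomial sequences\<close>

definition flow_potential :: "(real \<Rightarrow> real \<Rightarrow> nat \<Rightarrow> real) \<Rightarrow> real \<Rightarrow> nat \<Rightarrow> real" where
  "flow_potential c t = (if 0 \<le> t then c 0 t else binom_inv (c t 0))"

locale binom_flow =
  fixes I :: "real set" and N :: nat and c :: "real \<Rightarrow> real \<Rightarrow> nat \<Rightarrow> real"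
  assumes zero_in: "0 \<in> I"
    and normalized: "c s t 0 = 1"
    and semigroup: "\<lbrakk>s \<in> I; t \<in> I; u \<in> I; s \<le> t; t \<le> u; n \<le> N\<rbrakk> \<Longrightarrow>
      c s u n = binom_conv (c s t) (c t u) n"
begin

abbreviation "G \<equiv> flow_potential c"

lemma potential_0 [simp]: "G t 0 = 1"
  by (simp add: flow_potential_def normalized)

lemma potential_step:
  assumes "s \<in> I" "u \<in> I" "s \<le> u" "n \<le> N"
  shows "G u n = binom_conv (c s u) (G s) n"
proof (cases "0 \<le> s")
  case True
  then show ?thesis
    using assms semigroup[OF zero_in assms(1,2) True assms(3,4)]
    by (simp add: flow_potential_def binom_conv_commute[of "c 0 s"])
next
  case s_neg: False
  show ?thesis
  proof (cases "0 \<le> u")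
    case True
    have "c 0 u n = binom_conv (c s u) (binom_inv (c s 0)) n"
    proof (rule binom_conv_cancel)
      fix k assume "k \<le> n"
      then show "binom_conv (c 0 u) (c s 0) k = c s u k"
        using assms s_neg True semigroup[OF assms(1) zero_in assms(2)]
        by (simp add: binom_conv_commute[of "c 0 u"])
    qed (simp add: normalized)
    then show ?thesis using s_neg True by (simp add: flow_potential_def)
  next
    case False
    have "binom_inv (c u 0) n = binom_conv binom_unit (binom_inv (c u 0)) n" by simp
    also have "\<dots> = binom_conv (c s u) (binom_inv (c s 0)) n"
    proof (rule binom_conv_cancel[symmetric])
      fix k assume "k \<le> n"
      have "binom_conv (binom_conv (c s u) (binom_inv (c s 0))) (c u 0) k
          = binom_conv (binom_inv (c s 0)) (binom_conv (c s u) (c u 0)) k"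
        by (simp only: binom_conv.assoc binom_conv.commute binom_conv.left_commute)
      also have "\<dots> = binom_conv (binom_inv (c s 0)) (c s 0) k"
        using \<open>k \<le> n\<close> assms False semigroup[OF assms(1,2) zero_in assms(3)]
        by (intro binom_conv_cong) auto
      finally show "binom_conv (binom_conv (c s u) (binom_inv (c s 0))) (c u 0) k = binom_unit k"
        by (simp add: normalized)
    qed (simp add: normalized)
    finally show ?thesis using s_neg False by (simp add: flow_potential_def)
  qed
qed

lemma potential_increment:
  assumes "s \<in> I" "u \<in> I" "s \<le> u" "n \<le> N"
  shows "binom_conv (G u) (binom_inv (G s)) n = c s u n"
  by (rule binom_conv_cancel[symmetric]) (use assms potential_step in auto)

lemma continuous_on_potential:
  assumes "k \<le> N"
    and right: "\<And>t0 j. t0 \<in> I \<Longrightarrow> j \<le> N \<Longrightarrow> ((\<lambda>t. c t0 t j) \<longlongrightarrow> binom_unit j) (at t0 within I \<inter> {t0..})"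
    and left: "\<And>t0 j. t0 \<in> I \<Longrightarrow> j \<le> N \<Longrightarrow> ((\<lambda>t. c t t0 j) \<longlongrightarrow> binom_unit j) (at t0 within I \<inter> {..t0})"
  shows "continuous_on I (\<lambda>t. G t k)"
  unfolding continuous_on_def
proof
  fix t0 assume t0: "t0 \<in> I"
  have "((\<lambda>t. binom_conv (c t0 t) (G t0) k) \<longlongrightarrow> binom_conv binom_unit (G t0) k) (at t0 within I \<inter> {t0..})"
    by (rule tendsto_binom_conv) (use right t0 assms(1) in auto)
  moreover have "\<forall>\<^sub>F t in at t0 within I \<inter> {t0..}. binom_conv (c t0 t) (G t0) k = G t k"
    unfolding eventually_at_filter using t0 assms(1)
    by (intro always_eventually) (auto simp: potential_step)
  ultimately have R: "((\<lambda>t. G t k) \<longlongrightarrow> G t0 k) (at t0 within I \<inter> {t0..})"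
    by (simp add: Lim_transform_eventually)
  text \<open>From the left, \<open>G t\<close> is recovered from \<open>G t0\<close> by inverting the increment.\<close>
  have "((\<lambda>t. binom_conv (binom_inv (c t t0)) (G t0) k) \<longlongrightarrow> binom_conv (binom_inv binom_unit) (G t0) k)
      (at t0 within I \<inter> {..t0})"
    by (intro tendsto_binom_conv tendsto_binom_inv) (use left t0 assms(1) in auto)
  moreover have "\<forall>\<^sub>F t in at t0 within I \<inter> {..t0}. binom_conv (binom_inv (c t t0)) (G t0) k = G t k"
    unfolding eventually_at_filter
  proof (intro always_eventually allI impI)
    fix t assume t: "t \<in> I \<inter> {..t0}"
    have "G t k = binom_conv (G t0) (binom_inv (c t t0)) k"
    proof (rule binom_conv_cancel)
      fix j assume "j \<le> k"
      then show "binom_conv (G t) (c t t0) j = G t0 j"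
        using t t0 assms(1) potential_step[of t t0 j] by (simp add: binom_conv_commute[of "G t"])
    qed (simp add: normalized)
    then show "binom_conv (binom_inv (c t t0)) (G t0) k = G t k"
      by (simp add: binom_conv_commute[of "binom_inv (c t t0)"])
  qed
  ultimately have L: "((\<lambda>t. G t k) \<longlongrightarrow> G t0 k) (at t0 within I \<inter> {..t0})"
    by (simp add: Lim_transform_eventually)
  have "I = (I \<inter> {..t0}) \<union> (I \<inter> {t0..})" by auto
  then show "((\<lambda>t. G t k) \<longlongrightarrow> G t0 k) (at t0 within I)"
    using Lim_Un[OF L R] by simp
qed

end

section \<open>Moments and conditional expectations\<close>

lemma abs_mult_le_sum_squares: "\<bar>p * q\<bar> \<le> p\<^sup>2 + (q::real)\<^sup>2"
proof -
  have "0 \<le> (\<bar>p\<bar> - \<bar>q\<bar>)\<^sup>2 + \<bar>p\<bar> * \<bar>q\<bar>" by simp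
  then show ?thesis by (simp add: power2_eq_square abs_mult algebra_simps)
qed

lemma integrable_power_mult_power:
  fixes U V :: "'a \<Rightarrow> real"
  assumes "U \<in> borel_measurable M" "V \<in> borel_measurable M"
    and "\<And>k. integrable M (\<lambda>x. U x ^ k)" "\<And>k. integrable M (\<lambda>x. V x ^ k)"
  shows "integrable M (\<lambda>x. U x ^ a * V x ^ b)"
proof (rule Bochner_Integration.integrable_bound)
  show "integrable M (\<lambda>x. U x ^ (2 * a) + V x ^ (2 * b))"
    using assms(3,4) by auto
  show "(\<lambda>x. U x ^ a * V x ^ b) \<in> borel_measurable M"
    using assms(1,2) by measurable
  show "AE x in M. norm (U x ^ a * V x ^ b) \<le> norm (U x ^ (2 * a) + V x ^ (2 * b))"
  proof (intro AE_I2)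
    fix x
    have "U x ^ (2 * a) = (U x ^ a)\<^sup>2" "V x ^ (2 * b) = (V x ^ b)\<^sup>2"
      by (simp_all add: power_mult[symmetric] mult.commute)
    then show "norm (U x ^ a * V x ^ b) \<le> norm (U x ^ (2 * a) + V x ^ (2 * b))"
      using abs_mult_le_sum_squares[of "U x ^ a" "V x ^ b"] by simp
  qed
qed

lemma power_diff_binomial:
  "((b::real) - a) ^ n = (\<Sum>j=0..n. (real (n choose j) * (-1) ^ (n - j)) * (a ^ (n - j) * b ^ j))"
proof -
  have "(b - a) ^ n = (b + (- a)) ^ n" by simp
  also have "\<dots> = (\<Sum>j=0..n. (real (n choose j) * (-1) ^ (n - j)) * (a ^ (n - j) * b ^ j))"
    by (subst binomial_ring) (simp add: atLeast0AtMost power_minus[of a] ac_simps)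
  finally show ?thesis .
qed

lemma integrable_power_diff:
  fixes U V :: "'a \<Rightarrow> real"
  assumes "U \<in> borel_measurable M" "V \<in> borel_measurable M"
    and "\<And>k. integrable M (\<lambda>x. U x ^ k)" "\<And>k. integrable M (\<lambda>x. V x ^ k)"
  shows "integrable M (\<lambda>x. (V x - U x) ^ n)"
  unfolding power_diff_binomial using integrable_power_mult_power[OF assms] by simp

lemma space_nat_filt [simp]: "space (nat_filt M I X s) = space M"
  unfolding nat_filt_def
  by (rule space_measure_of) (auto, metis sets.sets_into_space space_vimage_algebra subsetD)

lemma sets_nat_filt:
  "sets (nat_filt M I X s)
    = sigma_sets (space M) (\<Union>v\<in>{v\<in>I. v \<le> s}. sets (vimage_algebra (space M) (X v) borel))"
  unfolding nat_filt_def
  by (rule sets_measure_of) (auto, metis sets.sets_into_space space_vimage_algebra subsetD)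

lemma subalgebra_nat_filt:
  assumes "\<And>v. v \<in> I \<Longrightarrow> X v \<in> borel_measurable M"
  shows "subalgebra M (nat_filt M I X s)"
proof -
  have "sets (vimage_algebra (space M) (X v) borel) \<subseteq> sets M" if "v \<in> I" for v
    using assms[OF that] by (simp add: measurable_iff_sets sets_vimage_algebra)
  then show ?thesis
    by (auto simp: subalgebra_def sets_nat_filt intro!: sets.sigma_sets_subset)
qed

lemma measurable_nat_filt:
  assumes "v \<in> I" "v \<le> s"
  shows "X v \<in> borel_measurable (nat_filt M I X s)"
proof (rule measurableI)
  fix A :: "real set" assume "A \<in> sets borel"
  then have "X v -` A \<inter> space M \<in> sets (vimage_algebra (space M) (X v) borel)"
    by (auto simp: sets_vimage_algebra)
  then show "X v -` A \<inter> space (nat_filt M I X s) \<in> sets (nat_filt M I X s)"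
    using assms unfolding sets_nat_filt by (auto intro: sigma_sets.Basic)
qed simp

lemma sigma_finite_subalgebra_nat_filt:
  assumes "prob_space M" "\<And>v. v \<in> I \<Longrightarrow> X v \<in> borel_measurable M"
  shows "sigma_finite_subalgebra M (nat_filt M I X s)"
proof -
  interpret prob_space M by (fact assms(1))
  have "finite_measure_subalgebra M (nat_filt M I X s)"
    by unfold_locales (rule subalgebra_nat_filt[OF assms(2)])
  then show ?thesis by (rule finite_measure_subalgebra_is_sigma_finite)
qed

lemma (in sigma_finite_subalgebra) real_cond_exp_sum_mult:
  assumes "finite K" "\<And>k. k \<in> K \<Longrightarrow> Y k \<in> borel_measurable F"
    "\<And>k. k \<in> K \<Longrightarrow> integrable M (f k)" "\<And>k. k \<in> K \<Longrightarrow> integrable M (\<lambda>x. Y k x * f k x)"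
  shows "AE x in M. real_cond_exp M F (\<lambda>x. \<Sum>k\<in>K. Y k x * f k x) x
    = (\<Sum>k\<in>K. Y k x * real_cond_exp M F (f k) x)"
  using assms
proof (induction K rule: finite_induct)
  case empty
  then show ?case by simp
next
  case (insert k K)
  have "AE x in M. real_cond_exp M F (\<lambda>x. Y k x * f k x + (\<Sum>k\<in>K. Y k x * f k x)) x
     = real_cond_exp M F (\<lambda>x. Y k x * f k x) x + real_cond_exp M F (\<lambda>x. \<Sum>k\<in>K. Y k x * f k x) x"
    using insert.prems by (intro real_cond_exp_add) auto
  moreover have "AE x in M. real_cond_exp M F (\<lambda>x. Y k x * f k x) x = Y k x * real_cond_exp M F (f k) x"
    using insert.prems by (intro real_cond_exp_mult) (auto intro: borel_measurable_integrable)
  moreover have "AE x in M. real_cond_exp M F (\<lambda>x. \<Sum>k\<in>K. Y k x * f k x) x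
      = (\<Sum>k\<in>K. Y k x * real_cond_exp M F (f k) x)"
    using insert by auto
  ultimately show ?case
    by eventually_elim (use insert.hyps in simp)
qed

lemma (in sigma_finite_subalgebra) real_cond_exp_binomial:
  assumes "Y \<in> borel_measurable F" "Z \<in> borel_measurable M"
    and "\<And>k. integrable M (\<lambda>x. Y x ^ k)" "\<And>k. integrable M (\<lambda>x. Z x ^ k)"
  shows "AE x in M. real_cond_exp M F (\<lambda>x. (Y x + Z x) ^ n) x
    = (\<Sum>k=0..n. real (n choose k) * Y x ^ k * real_cond_exp M F (\<lambda>x. Z x ^ (n - k)) x)"
proof -
  have Y: "Y \<in> borel_measurable M"
    using subalg assms(1) by (rule measurable_from_subalg)
  have "(\<lambda>x. (Y x + Z x) ^ n) = (\<lambda>x. \<Sum>k=0..n. (real (n choose k) * Y x ^ k) * Z x ^ (n - k))"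
    by (simp add: binomial_ring atLeast0AtMost ac_simps)
  moreover have "AE x in M. real_cond_exp M F (\<lambda>x. \<Sum>k=0..n. (real (n choose k) * Y x ^ k) * Z x ^ (n - k)) x
      = (\<Sum>k=0..n. (real (n choose k) * Y x ^ k) * real_cond_exp M F (\<lambda>x. Z x ^ (n - k)) x)"
    using assms integrable_power_mult_power[OF Y assms(2-4)]
    by (intro real_cond_exp_sum_mult) (auto simp: mult.assoc)
  ultimately show ?thesis by simp
qed

lemma (in sigma_finite_subalgebra) real_cond_exp_AE_const_eq_integral:
  assumes "prob_space M" "integrable M f" "AE x in M. real_cond_exp M F f x = c"
  shows "c = (\<integral>x. f x \<partial>M)"
proof -
  interpret prob_space M by (fact assms(1))
  have "(\<integral>x. f x \<partial>M) = (\<integral>x. real_cond_exp M F f x \<partial>M)"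
    using real_cond_exp_int(2)[OF assms(2)] by simp
  also have "\<dots> = c"
    using integral_cong_AE[of "real_cond_exp M F f" M "\<lambda>_. c"] assms(3) by (simp add: prob_space)
  finally show ?thesis by simp
qed

lemma AE_poly_eq_imp_coeff_eq:
  fixes U :: "'a \<Rightarrow> real" and a b :: "nat \<Rightarrow> real"
  assumes support: "\<not> (\<exists>S. finite S \<and> (AE x in M. U x \<in> S))"
    and eq: "AE x in M. (\<Sum>j=0..n. a j * U x ^ j) = (\<Sum>j=0..n. b j * U x ^ j)"
    and "j \<le> n"
  shows "a j = b j"
proof -
  define p :: "real poly" where "p = (\<Sum>j=0..n. monom (a j - b j) j)"
  have poly_p: "poly p x = (\<Sum>j=0..n. a j * x ^ j) - (\<Sum>j=0..n. b j * x ^ j)" for x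
    by (simp add: p_def poly_sum poly_monom sum_subtractf[symmetric] algebra_simps)
  have "p = 0"
  proof (rule ccontr)
    assume "p \<noteq> 0"
    moreover have "AE x in M. U x \<in> {x. poly p x = 0}"
      using eq by eventually_elim (simp add: poly_p)
    ultimately show False
      using support poly_roots_finite by blast
  qed
  then have "coeff p j = 0" by simp
  then show ?thesis
    using \<open>j \<le> n\<close> by (simp add: p_def coeff_sum coeff_monom)
qed

lemma (in sigma_finite_subalgebra) real_cond_exp_power_from_increments:
  assumes "Y \<in> borel_measurable F" "Z \<in> borel_measurable M"
    and "\<And>k. integrable M (\<lambda>x. Y x ^ k)" "\<And>k. integrable M (\<lambda>x. Z x ^ k)"
    and incr: "\<And>k. k \<le> n \<Longrightarrow> AE x in M. real_cond_exp M F (\<lambda>x. (Z x - Y x) ^ k) x = h k"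
  shows "AE x in M. real_cond_exp M F (\<lambda>x. Z x ^ n) x = binom_conv (\<lambda>k. Y x ^ k) h n"
proof -
  have Y: "Y \<in> borel_measurable M"
    using subalg assms(1) by (rule measurable_from_subalg)
  have "AE x in M. real_cond_exp M F (\<lambda>x. (Y x + (Z x - Y x)) ^ n) x
      = (\<Sum>k=0..n. real (n choose k) * Y x ^ k * real_cond_exp M F (\<lambda>x. (Z x - Y x) ^ (n - k)) x)"
    using assms(1-4) integrable_power_diff[OF Y assms(2)]
    by (intro real_cond_exp_binomial) (auto intro: borel_measurable_diff Y)
  moreover have "AE x in M. \<forall>k\<in>{0..n}. real_cond_exp M F (\<lambda>x. (Z x - Y x) ^ (n - k)) x = h (n - k)"
    using incr by (intro AE_finite_allI) auto
  ultimately show ?thesis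
    by eventually_elim (simp add: binom_conv_def)
qed

lemma (in sigma_finite_subalgebra) real_cond_exp_increment_from_powers:
  assumes "Y \<in> borel_measurable F" "Z \<in> borel_measurable M"
    and "\<And>k. integrable M (\<lambda>x. Y x ^ k)" "\<And>k. integrable M (\<lambda>x. Z x ^ k)"
    and pow: "\<And>k. k \<le> n \<Longrightarrow>
      AE x in M. real_cond_exp M F (\<lambda>x. Z x ^ k) x = binom_conv (\<lambda>k. Y x ^ k) h k"
  shows "AE x in M. real_cond_exp M F (\<lambda>x. (Z x - Y x) ^ n) x = h n"
proof -
  have "integrable M (\<lambda>x. (- Y x) ^ k)" for k
    using assms(3)[of k] by (simp add: power_minus[of "Y _"])
  then have "AE x in M. real_cond_exp M F (\<lambda>x. (- Y x + Z x) ^ n) x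
      = (\<Sum>k=0..n. real (n choose k) * (- Y x) ^ k * real_cond_exp M F (\<lambda>x. Z x ^ (n - k)) x)"
    using assms(1,2,4) by (intro real_cond_exp_binomial) auto
  moreover have "AE x in M. \<forall>k\<in>{0..n}.
      real_cond_exp M F (\<lambda>x. Z x ^ (n - k)) x = binom_conv (\<lambda>k. Y x ^ k) h (n - k)"
    using pow by (intro AE_finite_allI) auto
  ultimately show ?thesis
  proof eventually_elim
    case (elim x)
    then have "real_cond_exp M F (\<lambda>x. (Z x - Y x) ^ n) x
        = binom_conv (\<lambda>k. (- Y x) ^ k) (binom_conv (\<lambda>k. Y x ^ k) h) n"
      by (simp add: binom_conv_def)
    also have "\<dots> = h n"
      by (simp add: binom_conv.assoc[symmetric] binom_conv_powers_neg_powers)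
    finally show ?case .
  qed
qed

definition incr_moment :: "'a measure \<Rightarrow> (real \<Rightarrow> 'a \<Rightarrow> real) \<Rightarrow> real \<Rightarrow> real \<Rightarrow> nat \<Rightarrow> real" where
  "incr_moment M X s t n = (\<integral>\<omega>. (X t \<omega> - X s \<omega>) ^ n \<partial>M)"

lemma incr_moment_diag: "prob_space M \<Longrightarrow> incr_moment M X t t n = binom_unit n"
  by (cases n) (simp_all add: incr_moment_def binom_unit_def prob_space.prob_space)

lemma continuous_incr_moment_diag:
  assumes std: "std_process M I X" and msc: "MSC N M I X" and "n \<le> N" "t \<in> I"
  shows "continuous (at (t, t) within I \<times> I) (\<lambda>p. incr_moment M X (fst p) (snd p) n)"
proof (rule continuous_transform_within_openin)
  let ?mixed = "\<lambda>m j. \<lambda>(u, v). \<integral>\<omega>. X u \<omega> ^ m * X v \<omega> ^ j \<partial>M"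
  show "continuous (at (t, t) within I \<times> I)
      (\<lambda>p. \<Sum>j=0..n. (real (n choose j) * (-1) ^ (n - j)) * ?mixed (n - j) j p)"
    using msc assms(3,4) unfolding MSC_def by (intro continuous_intros) auto
  fix p assume "p \<in> I \<times> I"
  with std show "(\<Sum>j=0..n. (real (n choose j) * (-1) ^ (n - j)) * ?mixed (n - j) j p)
      = incr_moment M X (fst p) (snd p) n"
    unfolding incr_moment_def power_diff_binomial std_process_def
    by (subst Bochner_Integration.integral_sum) (auto intro!: integrable_power_mult_power split: prod.splits)
qed (use assms in auto)

lemma tendsto_incr_moment:
  assumes "std_process M I X" "MSC N M I X" "n \<le> N" "t0 \<in> I"
  shows "((\<lambda>t. incr_moment M X t0 t n) \<longlongrightarrow> binom_unit n) (at t0 within I)"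
    and "((\<lambda>t. incr_moment M X t t0 n) \<longlongrightarrow> binom_unit n) (at t0 within I)"
proof -
  let ?f = "\<lambda>p. incr_moment M X (fst p) (snd p) n"
  have cont: "continuous (at (t0, t0) within I \<times> I) ?f"
    by (rule continuous_incr_moment_diag[OF assms])
  have diag: "incr_moment M X t0 t0 n = binom_unit n"
    using assms(1) by (simp add: std_process_def incr_moment_diag)
  have "continuous (at t0 within I) (\<lambda>t. (t0, t))" "continuous (at t0 within I) (\<lambda>t. (t, t0))"
    by (intro continuous_intros)+
  moreover have "continuous (at (t0, t0) within (\<lambda>t. (t0, t)) ` I) ?f"
    "continuous (at (t0, t0) within (\<lambda>t. (t, t0)) ` I) ?f"
    using assms(4) by (intro continuous_within_subset[OF cont]; auto)+
  ultimately have "continuous (at t0 within I) (\<lambda>t. ?f (t0, t))" "continuous (at t0 within I) (\<lambda>t. ?f (t, t0))"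
    using continuous_within_compose2 by force+
  then show "((\<lambda>t. incr_moment M X t0 t n) \<longlongrightarrow> binom_unit n) (at t0 within I)"
    "((\<lambda>t. incr_moment M X t t0 n) \<longlongrightarrow> binom_unit n) (at t0 within I)"
    by (simp_all add: continuous_within diag)
qed

section \<open>Markov polynomial regressions\<close>

locale mpr_process =
  fixes M :: "'a measure" and I :: "real set" and X :: "real \<Rightarrow> 'a \<Rightarrow> real"
    and N :: nat and gamma :: "nat \<Rightarrow> nat \<Rightarrow> real \<Rightarrow> real \<Rightarrow> real"
  assumes mpr: "MPR N M I X gamma"
begin

abbreviation F :: "real \<Rightarrow> 'a measure" where "F s \<equiv> nat_filt M I X s"

lemma std: "std_process M I X"
  using mpr by (simp add: MPR_def)

lemma prob_space_M: "prob_space M"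
  using std by (simp add: std_process_def)

sublocale prob_space M
  by (fact prob_space_M)

lemma measurable_X: "t \<in> I \<Longrightarrow> X t \<in> borel_measurable M"
  using std by (simp add: std_process_def)

lemma integrable_X_power: "t \<in> I \<Longrightarrow> integrable M (\<lambda>\<omega>. X t \<omega> ^ k)"
  using std by (simp add: std_process_def)

lemma integrable_increment_power: "s \<in> I \<Longrightarrow> t \<in> I \<Longrightarrow> integrable M (\<lambda>\<omega>. (X t \<omega> - X s \<omega>) ^ k)"
  by (intro integrable_power_diff measurable_X integrable_X_power)

lemma incr_moment_zero [simp]: "incr_moment M X s t 0 = 1"
  by (simp add: incr_moment_def prob_space)

lemma sigma_finite_subalgebra_F: "sigma_finite_subalgebra M (F s)"
  using measurable_X by (intro sigma_finite_subalgebra_nat_filt) unfold_locales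

lemma cond_power_regression:
  assumes "1 \<le> n" "n \<le> N" "s \<in> I" "t \<in> I" "s \<le> t"
  shows "AE \<omega> in M. real_cond_exp M (F s) (\<lambda>\<omega>. X t \<omega> ^ n) \<omega> = (\<Sum>k=0..n. gamma n k s t * X s \<omega> ^ k)"
  using mpr assms unfolding MPR_def by blast

lemma cond_increment_if_binom_structural:
  assumes sm: "structural_matrix N I gamma (\<lambda>t. binom_mat N (v t))"
    and v0: "\<And>t. t \<in> I \<Longrightarrow> v t 0 = 1"
    and st: "s \<in> I" "t \<in> I" "s \<le> t" and "n \<le> N"
  shows "AE \<omega> in M. real_cond_exp M (F s) (\<lambda>\<omega>. (X t \<omega> - X s \<omega>) ^ n) \<omega>
    = binom_conv (v t) (binom_inv (v s)) n"
proof -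
  interpret sigma_finite_subalgebra M "F s" by (fact sigma_finite_subalgebra_F)
  define h where "h = binom_conv (v t) (binom_inv (v s))"
  have h0: "h 0 = 1"
    using st v0 by (simp add: h_def binom_conv_def)
  have "A_mat N gamma s t = binom_mat N h"
    using sm st by (simp add: structural_matrix_binom_mat_iff v0 h_def)
  then have gamma: "gamma k j s t = real (k choose j) * h (k - j)" if "1 \<le> k" "k \<le> N" "j \<le> k" for k j
    using that by (simp add: A_mat_eq_binom_mat_iff h0)
  have "AE \<omega> in M. real_cond_exp M (F s) (\<lambda>\<omega>. X t \<omega> ^ k) \<omega> = binom_conv (\<lambda>k. X s \<omega> ^ k) h k"
    if "k \<le> n" for k
  proof (cases "k = 0")
    case True
    then show ?thesis by (simp add: binom_conv_def h0)
  next
    case False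
    then show ?thesis
      using cond_power_regression[of k s t] that st \<open>n \<le> N\<close>
      by (simp add: binom_conv_powers_eq_poly gamma)
  qed
  then show ?thesis
    unfolding h_def[symmetric]
    using st by (intro real_cond_exp_increment_from_powers measurable_nat_filt measurable_X integrable_X_power) auto
qed

lemma constant_cond_increment_if_structural:
  assumes sm: "structural_matrix N I gamma (\<lambda>t. Matrix.mat (N+1) (N+1) (\<lambda>(i,j).
      if i < j then 0 else if i = j then 1 else real (i choose j) * g (i - j) t))"
    and "s \<in> I" "t \<in> I" "s \<le> t" "n \<le> N"
  shows "\<exists>c. AE \<omega> in M. real_cond_exp M (F s) (\<lambda>\<omega>. (X t \<omega> - X s \<omega>) ^ n) \<omega> = c"
proof -
  have "(\<lambda>t. Matrix.mat (N+1) (N+1) (\<lambda>(i,j).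
      if i < j then 0 else if i = j then 1 else real (i choose j) * g (i - j) t))
    = (\<lambda>t. binom_mat N (\<lambda>k. if k = 0 then 1 else g k t))"
    by (rule ext) (rule mat_unit_diagonal_eq_binom_mat)
  then show ?thesis
    using sm assms(2-5) cond_increment_if_binom_structural[of "\<lambda>t k. if k = 0 then 1 else g k t"]
    by auto
qed

end

locale mpr_constant_increments = mpr_process +
  assumes zero_in_I: "0 \<in> I"
    and constant_increments: "\<And>n s t. 0 < n \<Longrightarrow> n \<le> N \<Longrightarrow> s \<in> I \<Longrightarrow> t \<in> I \<Longrightarrow> s < t \<Longrightarrow>
      \<exists>c. AE \<omega> in M. real_cond_exp M (F s) (\<lambda>\<omega>. (X t \<omega> - X s \<omega>) ^ n) \<omega> = c"
begin

lemma cond_increment_eq_incr_moment: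
  assumes "s \<in> I" "t \<in> I" "s \<le> t" "n \<le> N"
  shows "AE \<omega> in M. real_cond_exp M (F s) (\<lambda>\<omega>. (X t \<omega> - X s \<omega>) ^ n) \<omega> = incr_moment M X s t n"
proof -
  interpret sigma_finite_subalgebra M "F s" by (fact sigma_finite_subalgebra_F)
  have "\<exists>c. AE \<omega> in M. real_cond_exp M (F s) (\<lambda>\<omega>. (X t \<omega> - X s \<omega>) ^ n) \<omega> = c"
  proof (cases "n = 0 \<or> s = t")
    case True
    then have "(\<lambda>\<omega>. (X t \<omega> - X s \<omega>) ^ n) = (\<lambda>_. binom_unit n)"
      by (auto simp: binom_unit_def)
    moreover have "AE \<omega> in M. real_cond_exp M (F s) (\<lambda>_. binom_unit n) \<omega> = binom_unit n"
      by (intro real_cond_exp_F_meas) auto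
    ultimately show ?thesis by (simp only:) blast
  qed (use assms constant_increments in auto)
  then obtain c where c: "AE \<omega> in M. real_cond_exp M (F s) (\<lambda>\<omega>. (X t \<omega> - X s \<omega>) ^ n) \<omega> = c" ..
  moreover have "c = incr_moment M X s t n"
    unfolding incr_moment_def using assms c
    by (intro real_cond_exp_AE_const_eq_integral integrable_increment_power) unfold_locales
  ultimately show ?thesis by simp
qed

lemma gamma_eq_incr_moment:
  assumes "s \<in> I" "t \<in> I" "s \<le> t" "1 \<le> n" "n \<le> N" "j \<le> n"
  shows "gamma n j s t = real (n choose j) * incr_moment M X s t (n - j)"
proof -
  interpret sigma_finite_subalgebra M "F s" by (fact sigma_finite_subalgebra_F)
  have "AE \<omega> in M. real_cond_exp M (F s) (\<lambda>\<omega>. X t \<omega> ^ n) \<omega> = binom_conv (\<lambda>k. X s \<omega> ^ k) (incr_moment M X s t) n"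
    using assms cond_increment_eq_incr_moment
    by (intro real_cond_exp_power_from_increments measurable_nat_filt measurable_X integrable_X_power) auto
  with cond_power_regression[OF assms(4,5,1-3)]
  have "AE \<omega> in M. (\<Sum>j=0..n. gamma n j s t * X s \<omega> ^ j)
      = (\<Sum>j=0..n. (real (n choose j) * incr_moment M X s t (n - j)) * X s \<omega> ^ j)"
    by eventually_elim (simp add: binom_conv_powers_eq_poly)
  then show ?thesis
    using std assms(1,6) unfolding std_process_def by (intro AE_poly_eq_imp_coeff_eq) auto
qed

text \<open>Chapman--Kolmogorov for increment moments: condition \<open>(X u - X s)^n\<close> on \<open>F t\<close>,
  split \<open>X u - X s = (X t - X s) + (X u - X t)\<close> binomially and integrate.\<close>

lemma incr_moment_semigroup:
  assumes "s \<in> I" "t \<in> I" "u \<in> I" "s \<le> t" "t \<le> u" "n \<le> N"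
  shows "incr_moment M X s u n = binom_conv (incr_moment M X s t) (incr_moment M X t u) n"
proof -
  interpret sigma_finite_subalgebra M "F t" by (fact sigma_finite_subalgebra_F)
  have "AE \<omega> in M. real_cond_exp M (F t) (\<lambda>\<omega>. ((X t \<omega> - X s \<omega>) + (X u \<omega> - X t \<omega>)) ^ n) \<omega>
      = (\<Sum>k=0..n. real (n choose k) * (X t \<omega> - X s \<omega>) ^ k *
           real_cond_exp M (F t) (\<lambda>\<omega>. (X u \<omega> - X t \<omega>) ^ (n - k)) \<omega>)"
    using assms
    by (intro real_cond_exp_binomial integrable_increment_power borel_measurable_diff
        measurable_nat_filt measurable_X) auto
  moreover have "AE \<omega> in M. \<forall>k\<in>{0..n}.
      real_cond_exp M (F t) (\<lambda>\<omega>. (X u \<omega> - X t \<omega>) ^ (n - k)) \<omega> = incr_moment M X t u (n - k)"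
    using assms by (intro AE_finite_allI cond_increment_eq_incr_moment) auto
  ultimately have "AE \<omega> in M. real_cond_exp M (F t) (\<lambda>\<omega>. (X u \<omega> - X s \<omega>) ^ n) \<omega>
      = (\<Sum>k=0..n. (real (n choose k) * incr_moment M X t u (n - k)) * (X t \<omega> - X s \<omega>) ^ k)"
    by eventually_elim (simp add: ac_simps)
  then have "(\<integral>\<omega>. real_cond_exp M (F t) (\<lambda>\<omega>. (X u \<omega> - X s \<omega>) ^ n) \<omega> \<partial>M)
      = (\<integral>\<omega>. (\<Sum>k=0..n. (real (n choose k) * incr_moment M X t u (n - k)) * (X t \<omega> - X s \<omega>) ^ k) \<partial>M)"
    using assms measurable_X
    by (intro integral_cong_AE borel_measurable_sum borel_measurable_times borel_measurable_power
        borel_measurable_diff borel_measurable_const) auto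
  then have "incr_moment M X s u n
      = (\<integral>\<omega>. (\<Sum>k=0..n. (real (n choose k) * incr_moment M X t u (n - k)) * (X t \<omega> - X s \<omega>) ^ k) \<partial>M)"
    unfolding incr_moment_def using assms
    by (simp add: real_cond_exp_int(2) integrable_increment_power)
  also have "\<dots> = binom_conv (incr_moment M X s t) (incr_moment M X t u) n"
    using assms by (simp add: integrable_increment_power incr_moment_def binom_conv_def ac_simps)
  finally show ?thesis .
qed

sublocale binom_flow I N "incr_moment M X"
  by unfold_locales (simp_all add: zero_in_I incr_moment_semigroup[symmetric])

lemma structural_matrix_of_potential:
  "structural_matrix N I gamma (\<lambda>t. binom_mat N (G t))"
proof -
  have "A_mat N gamma s u = binom_mat N (incr_moment M X s u)" if "s \<in> I" "u \<in> I" "s \<le> u" for s u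
    using that by (simp add: A_mat_eq_binom_mat_iff gamma_eq_incr_moment)
  moreover have "binom_mat N (binom_conv (G u) (binom_inv (G s))) = binom_mat N (incr_moment M X s u)"
    if "s \<in> I" "u \<in> I" "s \<le> u" for s u
    using that by (intro binom_mat_cong potential_increment)
  ultimately show ?thesis
    by (simp add: structural_matrix_binom_mat_iff)
qed

lemma potential_at_0: "G 0 = binom_unit"
  by (simp add: flow_potential_def incr_moment_diag prob_space_M fun_eq_iff)

lemma continuous_on_potential_component: "k \<le> N \<Longrightarrow> continuous_on I (\<lambda>t. G t k)"
  using std mpr unfolding MPR_def
  by (intro continuous_on_potential tendsto_within_subset[OF tendsto_incr_moment(1)]
      tendsto_within_subset[OF tendsto_incr_moment(2)]) auto

lemma exists_unit_diagonal_structural_matrix: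
  "\<exists>g. (\<forall>k\<in>{1..N}. continuous_on I (g k) \<and> g k 0 = 0) \<and>
    structural_matrix N I gamma (\<lambda>t. Matrix.mat (N+1) (N+1) (\<lambda>(i,j).
      if i < j then 0 else if i = j then 1 else real (i choose j) * g (i - j) t))"
proof (intro exI conjI)
  show "\<forall>k\<in>{1..N}. continuous_on I (\<lambda>t. G t k) \<and> G 0 k = 0"
    using continuous_on_potential_component by (simp add: potential_at_0 binom_unit_def)
  have "Matrix.mat (N+1) (N+1) (\<lambda>(i,j).
      if i < j then 0 else if i = j then 1 else real (i choose j) * G t (i - j)) = binom_mat N (G t)" for t
    unfolding mat_unit_diagonal_eq_binom_mat by (rule binom_mat_cong) simp
  then show "structural_matrix N I gamma (\<lambda>t. Matrix.mat (N+1) (N+1) (\<lambda>(i,j).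
      if i < j then 0 else if i = j then 1 else real (i choose j) * G t (i - j)))"
    using structural_matrix_of_potential by simp
qed

end

theorem corollary3:
  fixes M :: "'a measure" and I :: "real set" and X :: "real \<Rightarrow> 'a \<Rightarrow> real"
    and N :: nat and gamma :: "nat \<Rightarrow> nat \<Rightarrow> real \<Rightarrow> real \<Rightarrow> real"
  assumes "MPR N M I X gamma" and "0 \<in> I"
  shows "(\<forall>n. 0 < n \<and> n \<le> N \<longrightarrow> (\<forall>s\<in>I. \<forall>t\<in>I. s < t \<longrightarrow>
            (\<exists>c::real. AE \<omega> in M.
               real_cond_exp M (nat_filt M I X s) (\<lambda>\<omega>. (X t \<omega> - X s \<omega>) ^ n) \<omega> = c)))
     \<longleftrightarrow>
         (\<exists>g :: nat \<Rightarrow> real \<Rightarrow> real.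
            (\<forall>k\<in>{1..N}. continuous_on I (g k) \<and> g k 0 = 0) \<and>
            structural_matrix N I gamma
              (\<lambda>t. Matrix.mat (N+1) (N+1) (\<lambda>(i,j).
                  if i < j then 0 else if i = j then 1 else real (i choose j) * g (i - j) t)))"
  (is "?constant \<longleftrightarrow> ?structural")
proof
  assume ?constant
  then interpret mpr_constant_increments M I X N gamma
    using assms by unfold_locales auto
  show ?structural
    by (fact exists_unit_diagonal_structural_matrix)
next
  assume ?structural
  interpret mpr_process M I X N gamma
    by (fact mpr_process.intro[OF assms(1)])
  from \<open>?structural\<close> obtain g where "structural_matrix N I gamma (\<lambda>t. Matrix.mat (N+1) (N+1) (\<lambda>(i,j).
      if i < j then 0 else if i = j then 1 else real (i choose j) * g (i - j) t))"
    by blast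
  then show ?constant
    using constant_cond_increment_if_structural by (meson less_imp_le)
qed

end
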